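(* Let $F$ be a recurrent set and let $X\subset F$ be a bifix code of finite $F$-degree $d\ge 2$. Let $I=I(X)$, $K=K(X)$, $G=(IA\cap F)\setminus I$ and $D=(AI\cap F)\setminus I$. Then $X'=K\cup(G\cap D)$ is a bifix code of $F$-degree $d-1$.
   Context: $A$ is a finite alphabet. $F\subset A^*$ is recurrent if it is nonempty, closed under factors, and for all $u,w\in F$ there is $v\in F$ with $uvw\in F$. A bifix code is a set of nonempty words none of which is a proper prefix or proper suffix of another. A parse of $w$ with respect to $X$ is a triple $(v,x,u)$ with $w=vxu$, $v$ having no suffix in $X$, $x\in X^*$, $u$ having no prefix in $X$; $\delta_X(w)$ is the number of parses and the $F$-degree is $d_F(X)=\max_{w\in F}\delta_X(w)$. $I(X)=\{w\in A^*\mid A^+wA^+\cap X\neq\emptyset\}$ is the set of internal factors of $X$, and $K(X)=X\cap I(X)$ is the kernel of $X$. *)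

theory Defs
  imports Main "HOL-Library.Sublist"
begin

definition factor :: "'a list \<Rightarrow> 'a list \<Rightarrow> bool" where
  "factor u w \<longleftrightarrow> (\<exists>p s. w = p @ u @ s)"

definition factorial :: "'a list set \<Rightarrow> bool" where
  "factorial F \<longleftrightarrow> (\<forall>w\<in>F. \<forall>u. factor u w \<longrightarrow> u \<in> F)"

definition recurrent :: "'a set \<Rightarrow> 'a list set \<Rightarrow> bool" where
  "recurrent A F \<longleftrightarrow> F \<noteq> {} \<and> F \<subseteq> lists A \<and> factorial F \<and>
     (\<forall>u\<in>F. \<forall>w\<in>F. \<exists>v\<in>F. u @ v @ w \<in> F)"

definition bifix_code :: "'a list set \<Rightarrow> bool" where
  "bifix_code X \<longleftrightarrow> [] \<notin> X \<and>
     (\<forall>x\<in>X. \<forall>y\<in>X. \<not> strict_prefix x y \<and> \<not> strict_suffix x y)"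

definition star :: "'a list set \<Rightarrow> 'a list set" where
  "star X = {concat xs | xs. set xs \<subseteq> X}"

definition parses :: "'a list set \<Rightarrow> 'a list \<Rightarrow> ('a list \<times> 'a list \<times> 'a list) set" where
  "parses X w = {(v, x, u). w = v @ x @ u \<and> (\<forall>s. suffix s v \<longrightarrow> s \<notin> X)
       \<and> x \<in> star X \<and> (\<forall>p. prefix p u \<longrightarrow> p \<notin> X)}"

definition delta :: "'a list set \<Rightarrow> 'a list \<Rightarrow> nat" where
  "delta X w = card (parses X w)"

definition has_F_degree :: "'a list set \<Rightarrow> 'a list set \<Rightarrow> nat \<Rightarrow> bool" where
  "has_F_degree F X d \<longleftrightarrow> (\<exists>w\<in>F. delta X w = d) \<and> (\<forall>w\<in>F. delta X w \<le> d)"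

definition internal :: "'a set \<Rightarrow> 'a list set \<Rightarrow> 'a list set" where
  "internal A X = {w \<in> lists A. \<exists>p s. p \<in> lists A \<and> s \<in> lists A \<and> p \<noteq> [] \<and> s \<noteq> []
       \<and> p @ w @ s \<in> X}"

definition kernel :: "'a set \<Rightarrow> 'a list set \<Rightarrow> 'a list set" where
  "kernel A X = X \<inter> internal A X"

end

theory Submission
  imports Defs
begin

text \<open>
  For a bifix code Y, a parse (v, x, u) of w is determined by its left part v alone,
  and also by its right part u alone, so delta Y w counts the prefixes of w without a suffix in Y
  (equivalently the suffixes without a prefix in Y).  Consequently delta Y grows by at most one per
  letter appended on either side, and is monotone under taking factors.

  In a recurrent set F the F-degree d of X separates internal factors from the rest: a word of F
  lies in I = I(X) iff delta X w < d.  For w in I this holds because w is a proper factor of a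
  code word; for w not in I one embeds w as z t w t' z with z of maximal degree and maps the
  parses of that word injectively onto parses of w.

  Every word of G \<inter> D lies outside I while its longest proper prefix and suffix lie in I; by the
  dichotomy it has no prefix and no suffix in X.  From this X' = K \<union> (G \<inter> D) is a bifix code that
  agrees with X on I, so delta X' = delta X < d on I; and every word of F outside I has a suffix
  in X', which gives delta X' = d - 1 outside I by induction on the length.
\<close>

section \<open>Parses with respect to a bifix code\<close>

definition no_suffix_in :: "'a list set \<Rightarrow> 'a list \<Rightarrow> bool" where
  "no_suffix_in Y v \<longleftrightarrow> (\<forall>s. suffix s v \<longrightarrow> s \<notin> Y)"

definition no_prefix_in :: "'a list set \<Rightarrow> 'a list \<Rightarrow> bool" where
  "no_prefix_in Y u \<longleftrightarrow> (\<forall>p. prefix p u \<longrightarrow> p \<notin> Y)"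

definition left_parts :: "'a list set \<Rightarrow> 'a list \<Rightarrow> 'a list set" where
  "left_parts Y w = {v. prefix v w \<and> no_suffix_in Y v}"

definition right_parts :: "'a list set \<Rightarrow> 'a list \<Rightarrow> 'a list set" where
  "right_parts Y w = {u. suffix u w \<and> no_prefix_in Y u}"

lemma star_iff: "x \<in> star Y \<longleftrightarrow> (\<exists>xs. set xs \<subseteq> Y \<and> x = concat xs)"
  unfolding star_def by auto

lemma parses_iff:
  "(v, x, u) \<in> parses Y w \<longleftrightarrow>
     w = v @ x @ u \<and> no_suffix_in Y v \<and> x \<in> star Y \<and> no_prefix_in Y u"
  unfolding parses_def no_suffix_in_def no_prefix_in_def by auto

lemma bifix_code_nil: "bifix_code Y \<Longrightarrow> [] \<notin> Y"
  unfolding bifix_code_def by blast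

lemma bifix_code_prefix_eq: "bifix_code Y \<Longrightarrow> x \<in> Y \<Longrightarrow> y \<in> Y \<Longrightarrow> prefix x y \<Longrightarrow> x = y"
  unfolding bifix_code_def strict_prefix_def by blast

lemma bifix_code_suffix_eq: "bifix_code Y \<Longrightarrow> x \<in> Y \<Longrightarrow> y \<in> Y \<Longrightarrow> suffix x y \<Longrightarrow> x = y"
  unfolding bifix_code_def strict_suffix_def by blast

lemma concat_no_prefix_unique:
  assumes "bifix_code Y"
  shows "set xs \<subseteq> Y \<Longrightarrow> set ys \<subseteq> Y \<Longrightarrow> concat xs @ u = concat ys @ u' \<Longrightarrow>
    no_prefix_in Y u \<Longrightarrow> no_prefix_in Y u' \<Longrightarrow> xs = ys \<and> u = u'"
proof (induction xs arbitrary: ys)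
  case Nil
  then show ?case
    by (cases ys) (auto simp: no_prefix_in_def)
next
  case (Cons x xs)
  obtain y ys' where ys: "ys = y # ys'"
    using Cons.prems by (cases ys) (auto simp: no_prefix_in_def)
  with Cons.prems have eq: "x @ (concat xs @ u) = y @ (concat ys' @ u')" by simp
  have "prefix x y \<or> prefix y x"
    by (metis eq prefix_same_cases prefixI)
  then have "x = y"
    using Cons.prems ys bifix_code_prefix_eq[OF assms] by (metis list.set_intros(1) subsetD)
  with eq Cons.IH[of ys'] Cons.prems ys show ?case by auto
qed

lemma no_suffix_concat_unique:
  assumes "bifix_code Y"
  shows "set xs \<subseteq> Y \<Longrightarrow> set ys \<subseteq> Y \<Longrightarrow> v @ concat xs = v' @ concat ys \<Longrightarrow>
    no_suffix_in Y v \<Longrightarrow> no_suffix_in Y v' \<Longrightarrow> v = v'"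
proof (induction xs arbitrary: ys rule: rev_induct)
  case Nil
  show ?case
  proof (cases ys rule: rev_exhaust)
    case (snoc ys' y)
    with Nil.prems have "suffix y v" "y \<in> Y" by (auto simp: suffix_def)
    with Nil.prems show ?thesis by (auto simp: no_suffix_in_def)
  qed (use Nil.prems in simp)
next
  case (snoc x xs)
  obtain y ys' where ys: "ys = ys' @ [y]"
    using snoc.prems by (cases ys rule: rev_exhaust) (fastforce simp: no_suffix_in_def suffix_def)+
  with snoc.prems have eq: "(v @ concat xs) @ x = (v' @ concat ys') @ y" by simp
  have "suffix x y \<or> suffix y x"
    by (metis eq suffix_same_cases suffixI)
  then have "x = y"
    using snoc.prems ys bifix_code_suffix_eq[OF assms] by auto
  with eq snoc.IH[of ys'] snoc.prems ys show ?case by auto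
qed

lemma concat_no_prefix_exists:
  assumes "bifix_code Y"
  shows "\<exists>xs u. set xs \<subseteq> Y \<and> r = concat xs @ u \<and> no_prefix_in Y u"
proof (induction r rule: length_induct)
  case (1 r)
  show ?case
  proof (cases "no_prefix_in Y r")
    case True
    then show ?thesis by (intro exI[of _ "[]"] exI[of _ r]) auto
  next
    case False
    then obtain p r' where p: "p \<in> Y" "r = p @ r'"
      unfolding no_prefix_in_def prefix_def by auto
    then have "length r' < length r"
      using bifix_code_nil[OF assms] by (cases p) auto
    with 1 obtain xs u where "set xs \<subseteq> Y" "r' = concat xs @ u" "no_prefix_in Y u" by blast
    with p show ?thesis by (intro exI[of _ "p # xs"]) auto
  qed
qed

lemma no_suffix_concat_exists:
  assumes "bifix_code Y"
  shows "\<exists>v xs. set xs \<subseteq> Y \<and> r = v @ concat xs \<and> no_suffix_in Y v"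
proof (induction r rule: length_induct)
  case (1 r)
  show ?case
  proof (cases "no_suffix_in Y r")
    case True
    then show ?thesis by (intro exI[of _ r] exI[of _ "[]"]) auto
  next
    case False
    then obtain p r' where p: "p \<in> Y" "r = r' @ p"
      unfolding no_suffix_in_def suffix_def by auto
    then have "length r' < length r"
      using bifix_code_nil[OF assms] by (cases p) auto
    with 1 obtain v xs where "set xs \<subseteq> Y" "r' = v @ concat xs" "no_suffix_in Y v" by blast
    with p show ?thesis by (intro exI[of _ v] exI[of _ "xs @ [p]"]) auto
  qed
qed

lemma parse_determined_by_left:
  assumes "bifix_code Y" "(v, x, u) \<in> parses Y w" "(v, x', u') \<in> parses Y w"
  shows "x = x' \<and> u = u'"
proof -
  obtain xs xs' where "set xs \<subseteq> Y" "x = concat xs" "set xs' \<subseteq> Y" "x' = concat xs'"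
    and "concat xs @ u = concat xs' @ u'" "no_prefix_in Y u" "no_prefix_in Y u'"
    using assms(2,3) unfolding parses_iff star_iff by auto
  with concat_no_prefix_unique[OF assms(1)] show ?thesis by metis
qed

lemma parse_determined_by_right:
  assumes "bifix_code Y" "(v, x, u) \<in> parses Y w" "(v', x', u) \<in> parses Y w"
  shows "v = v' \<and> x = x'"
proof -
  obtain xs xs' where "set xs \<subseteq> Y" "x = concat xs" "set xs' \<subseteq> Y" "x' = concat xs'"
    and eq: "v @ x = v' @ x'" and "no_suffix_in Y v" "no_suffix_in Y v'"
    using assms(2,3) unfolding parses_iff star_iff by auto
  with no_suffix_concat_unique[OF assms(1)] have "v = v'" by metis
  with eq show ?thesis by simp
qed

lemma left_parts_eq: "bifix_code Y \<Longrightarrow> left_parts Y w = fst ` parses Y w"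
proof (intro equalityI subsetI)
  fix v assume "bifix_code Y" "v \<in> left_parts Y w"
  then obtain r xs u where "w = v @ r" "no_suffix_in Y v"
    and "set xs \<subseteq> Y" "r = concat xs @ u" "no_prefix_in Y u"
    using concat_no_prefix_exists unfolding left_parts_def prefix_def by blast
  then have "(v, concat xs, u) \<in> parses Y w" unfolding parses_iff star_iff by auto
  then show "v \<in> fst ` parses Y w" by force
qed (auto simp: left_parts_def parses_iff)

lemma right_parts_eq: "bifix_code Y \<Longrightarrow> right_parts Y w = (snd \<circ> snd) ` parses Y w"
proof (intro equalityI subsetI)
  fix u assume "bifix_code Y" "u \<in> right_parts Y w"
  then obtain r v xs where "w = r @ u" "no_prefix_in Y u"
    and "set xs \<subseteq> Y" "r = v @ concat xs" "no_suffix_in Y v"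
    using no_suffix_concat_exists unfolding right_parts_def suffix_def by blast
  then have "(v, concat xs, u) \<in> parses Y w" unfolding parses_iff star_iff by auto
  then show "u \<in> (snd \<circ> snd) ` parses Y w" by force
qed (auto simp: right_parts_def parses_iff suffix_def)

lemma delta_eq_card_left_parts: "bifix_code Y \<Longrightarrow> delta Y w = card (left_parts Y w)"
  unfolding delta_def left_parts_eq
  by (rule card_image[symmetric]) (auto intro!: inj_onI dest: parse_determined_by_left)

lemma delta_eq_card_right_parts: "bifix_code Y \<Longrightarrow> delta Y w = card (right_parts Y w)"
  unfolding delta_def right_parts_eq
  by (rule card_image[symmetric]) (auto intro!: inj_onI dest: parse_determined_by_right)

lemma finite_left_parts: "finite (left_parts Y w)"
  by (rule finite_subset[of _ "set (prefixes w)"]) (auto simp: left_parts_def)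

lemma finite_right_parts: "finite (right_parts Y w)"
  by (rule finite_subset[of _ "set (suffixes w)"]) (auto simp: right_parts_def)

text \<open>Appending a letter on the right adds at most one new left part, namely the whole word;
  symmetrically on the left.\<close>

lemma delta_snoc:
  assumes "bifix_code Y"
  shows "delta Y (w @ [a]) = delta Y w + (if no_suffix_in Y (w @ [a]) then 1 else 0)"
proof -
  have "left_parts Y (w @ [a]) =
      left_parts Y w \<union> (if no_suffix_in Y (w @ [a]) then {w @ [a]} else {})"
    by (auto simp: left_parts_def)
  moreover have "w @ [a] \<notin> left_parts Y w"
    by (auto simp: left_parts_def dest: prefix_length_le)
  ultimately show ?thesis
    using finite_left_parts[of Y w] by (simp add: delta_eq_card_left_parts[OF assms])
qed

lemma delta_cons:
  assumes "bifix_code Y"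
  shows "delta Y (a # w) = delta Y w + (if no_prefix_in Y (a # w) then 1 else 0)"
proof -
  have "right_parts Y (a # w) =
      right_parts Y w \<union> (if no_prefix_in Y (a # w) then {a # w} else {})"
    by (auto simp: right_parts_def suffix_Cons)
  moreover have "a # w \<notin> right_parts Y w"
    by (auto simp: right_parts_def dest: suffix_length_le)
  ultimately show ?thesis
    using finite_right_parts[of Y w] by (simp add: delta_eq_card_right_parts[OF assms])
qed

lemma delta_prefix_mono: "bifix_code Y \<Longrightarrow> prefix u w \<Longrightarrow> delta Y u \<le> delta Y w"
  unfolding delta_eq_card_left_parts
  by (rule card_mono[OF finite_left_parts]) (auto simp: left_parts_def)

lemma delta_suffix_mono: "bifix_code Y \<Longrightarrow> suffix u w \<Longrightarrow> delta Y u \<le> delta Y w"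
  unfolding delta_eq_card_right_parts
  by (rule card_mono[OF finite_right_parts]) (auto simp: right_parts_def)

lemma delta_factor_mono: "bifix_code Y \<Longrightarrow> delta Y w \<le> delta Y (p @ w @ s)"
  by (metis delta_prefix_mono delta_suffix_mono le_trans prefixI suffixI)

lemma delta_nil: "bifix_code Y \<Longrightarrow> delta Y [] = 1"
proof -
  assume "bifix_code Y"
  then have "left_parts Y [] = {[]}"
    using bifix_code_nil[of Y] by (auto simp: left_parts_def no_suffix_in_def)
  with \<open>bifix_code Y\<close> show ?thesis by (simp add: delta_eq_card_left_parts)
qed

lemma delta_cong:
  assumes "bifix_code X" "bifix_code Y" and agree: "\<And>s. factor s w \<Longrightarrow> s \<in> X \<longleftrightarrow> s \<in> Y"
  shows "delta X w = delta Y w"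
proof -
  have "s \<in> X \<longleftrightarrow> s \<in> Y" if "prefix v w" "suffix s v" for v s
    using that agree unfolding factor_def prefix_def suffix_def by fastforce
  then have "left_parts X w = left_parts Y w"
    unfolding left_parts_def no_suffix_in_def by blast
  with assms(1,2) show ?thesis by (simp add: delta_eq_card_left_parts)
qed

section \<open>Factors of products of code words\<close>

lemma no_suffix_in_strict_suffix:
  assumes "bifix_code Y" "x \<in> Y" "strict_suffix v x"
  shows "no_suffix_in Y v"
  unfolding no_suffix_in_def
proof (intro allI impI notI)
  fix s assume "suffix s v" "s \<in> Y"
  then have "strict_suffix s x"
    using assms(3) by (auto intro: suffix_order.le_less_trans)
  with bifix_code_suffix_eq[OF assms(1) \<open>s \<in> Y\<close> assms(2)] show False
    by (auto simp: strict_suffix_def)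
qed

lemma concat_split_suffix:
  "set xs \<subseteq> X \<Longrightarrow> concat xs = al @ w \<Longrightarrow>
   \<exists>xs1 xs2 v. set xs1 \<subseteq> X \<and> set xs2 \<subseteq> X \<and> al @ v = concat xs1 \<and> w = v @ concat xs2
     \<and> (v = [] \<or> (\<exists>x\<in>X. strict_suffix v x))"
proof (induction xs arbitrary: w rule: rev_induct)
  case Nil
  then show ?case by (intro exI[of _ "[]"]) auto
next
  case (snoc x xs)
  then have xX: "x \<in> X" and xsX: "set xs \<subseteq> X" by auto
  from snoc.prems(2) consider m where "concat xs = al @ m" "w = m @ x"
    | m where "al = concat xs @ m" "x = m @ w"
    by (auto simp: append_eq_append_conv2)
  then show ?case
  proof cases
    case 1
    with snoc.IH[OF xsX] obtain xs1 xs2 v where "set xs1 \<subseteq> X" "set xs2 \<subseteq> X"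
      "al @ v = concat xs1" "m = v @ concat xs2" "v = [] \<or> (\<exists>x\<in>X. strict_suffix v x)"
      by blast
    with 1 xX show ?thesis by (intro exI[of _ xs1] exI[of _ "xs2 @ [x]"] exI[of _ v]) auto
  next
    case 2
    show ?thesis
    proof (cases "m = []")
      case True
      with 2 xX xsX show ?thesis by (intro exI[of _ xs] exI[of _ "[x]"] exI[of _ "[]"]) auto
    next
      case False
      with 2 have "strict_suffix w x" by (auto simp: strict_suffix_def suffix_def)
      with 2 xX xsX show ?thesis by (intro exI[of _ "xs @ [x]"] exI[of _ "[]"] exI[of _ w]) auto
    qed
  qed
qed

lemma left_part_of_noninternal_factor:
  assumes code: "bifix_code X" and xs: "set xs \<subseteq> X" "concat xs = al @ w @ be"
    and not_inside: "\<And>p s. p \<noteq> [] \<Longrightarrow> s \<noteq> [] \<Longrightarrow> p @ w @ s \<notin> X"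
  shows "\<exists>xs1 v. set xs1 \<subseteq> X \<and> al @ v = concat xs1 \<and> v \<in> left_parts X w"
proof -
  obtain xs1 xs2 v where xs1: "set xs1 \<subseteq> X" "al @ v = concat xs1"
    and split: "w @ be = v @ concat xs2" and v: "v = [] \<or> (\<exists>x\<in>X. strict_suffix v x)"
    using concat_split_suffix[OF xs] by blast
  have "prefix v w"
  proof (rule ccontr)
    assume "\<not> prefix v w"
    moreover have "prefix v (w @ be)" "prefix w (w @ be)"
      using split by (metis prefixI)+
    ultimately obtain m where vm: "v = w @ m" "m \<noteq> []"
      using prefix_same_cases by (metis append.right_neutral prefix_def)
    then obtain x where "x \<in> X" "strict_suffix v x" using v by auto
    then obtain c where "x = c @ w @ m" "c \<noteq> []"
      using vm by (auto simp: strict_suffix_def suffix_def)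
    with not_inside \<open>x \<in> X\<close> \<open>m \<noteq> []\<close> show False by blast
  qed
  moreover have "no_suffix_in X v"
    using v no_suffix_in_strict_suffix[OF code] bifix_code_nil[OF code]
    by (auto simp: no_suffix_in_def)
  ultimately show ?thesis using xs1 unfolding left_parts_def by blast
qed

section \<open>The degree separates internal factors\<close>

lemma delta_lt_of_proper_factor:
  assumes code: "bifix_code X" and x: "p @ w @ s \<in> X" and "p \<noteq> []" "s \<noteq> []"
  shows "delta X w < delta X (p @ w @ s)"
proof -
  obtain c p' e s' where p: "p = c # p'" and s: "s = s' @ [e]"
    using assms(3,4) by (metis list.exhaust rev_exhaust)
  have "no_prefix_in X (c # p' @ w @ s')"
    unfolding no_prefix_in_def
  proof (intro allI impI notI)
    fix q assume "prefix q (c # p' @ w @ s')" "q \<in> X"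
    moreover from this have "prefix q (p @ w @ s)"
      using p s by (metis append_Cons append_assoc prefix_append)
    ultimately show False
      using bifix_code_prefix_eq[OF code _ x] p s by (fastforce dest: prefix_length_le)
  qed
  then have "delta X (p' @ w @ s') < delta X (c # p' @ w @ s')"
    using delta_cons[OF code] by simp
  also have "\<dots> \<le> delta X (p @ w @ s)"
    using delta_prefix_mono[OF code] p s by simp
  finally show ?thesis
    using delta_factor_mono[OF code, of w p' s'] by simp
qed

lemma factorial_factor: "factorial F \<Longrightarrow> p @ q @ r \<in> F \<Longrightarrow> q \<in> F"
  unfolding factorial_def factor_def by blast

lemma factorial_prefix: "factorial F \<Longrightarrow> w \<in> F \<Longrightarrow> prefix u w \<Longrightarrow> u \<in> F"
  using factorial_factor[of F "[]" u] by (auto simp: prefix_def)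

lemma factorial_suffix: "factorial F \<Longrightarrow> w \<in> F \<Longrightarrow> suffix u w \<Longrightarrow> u \<in> F"
  using factorial_factor[of F _ u "[]"] by (auto simp: suffix_def)

lemma left_part_within_maximal_prefix:
  assumes code: "bifix_code X" and "factorial F" "z @ m \<in> F"
    and maximal: "\<forall>q\<in>F. delta X q \<le> delta X z" and v: "v \<in> left_parts X (z @ m)"
  shows "prefix v z"
proof (rule ccontr)
  assume "\<not> prefix v z"
  moreover have "prefix v (z @ m)" using v unfolding left_parts_def by simp
  ultimately have "prefix z v" "v \<noteq> z"
    using prefix_same_cases[of v "z @ m" z] by auto
  then obtain v0 a where v0: "v = v0 @ [a]" "prefix z v0"
    by (cases v rule: rev_exhaust) auto
  have "delta X z < delta X v"
    using v v0 delta_snoc[OF code, of v0 a] delta_prefix_mono[OF code, of z v0]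
    unfolding left_parts_def by simp
  moreover have "v \<in> F"
    using factorial_prefix assms(2,3) v unfolding left_parts_def by blast
  ultimately show False using maximal by fastforce
qed

lemma right_part_within_maximal_suffix:
  assumes code: "bifix_code X" and "factorial F" "m @ z \<in> F"
    and maximal: "\<forall>q\<in>F. delta X q \<le> delta X z" and u: "u \<in> right_parts X (m @ z)"
  shows "suffix u z"
proof (rule ccontr)
  assume "\<not> suffix u z"
  moreover have "suffix u (m @ z)" using u unfolding right_parts_def by simp
  ultimately have "suffix z u" "u \<noteq> z"
    using suffix_same_cases[of u "m @ z" z] by (auto simp: suffix_appendI)
  then obtain u0 a where u0: "u = a # u0" "suffix z u0"
    by (cases u) (auto simp: suffix_Cons)
  have "delta X z < delta X u"
    using u u0 delta_cons[OF code, of a u0] delta_suffix_mono[OF code, of z u0]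
    unfolding right_parts_def by simp
  moreover have "u \<in> F"
    using factorial_suffix assms(2,3) u unfolding right_parts_def by blast
  ultimately show False using maximal by fastforce
qed

text \<open>If all left parts of y = P w S lie in P, all right parts in S, and w is not inside a code
  word, then each parse of y induces a parse of w, injectively; so y has at most as many parses.\<close>

lemma delta_le_of_bordered:
  assumes code: "bifix_code X" and y: "y = P @ w @ S"
    and not_inside: "\<And>p s. p \<noteq> [] \<Longrightarrow> s \<noteq> [] \<Longrightarrow> p @ w @ s \<notin> X"
    and left: "\<And>v. v \<in> left_parts X y \<Longrightarrow> prefix v P"
    and right: "\<And>u. u \<in> right_parts X y \<Longrightarrow> suffix u S"
  shows "delta X y \<le> delta X w"
proof -
  let ?r = "\<lambda>v v'. \<exists>xs1. set xs1 \<subseteq> X \<and> P @ v' = v @ concat xs1"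
  have "card (left_parts X y) \<le> card (left_parts X w)"
  proof (rule card_le_if_inj_on_rel[where r = ?r, OF finite_left_parts])
    fix v assume v: "v \<in> left_parts X y"
    then obtain x u where parse: "(v, x, u) \<in> parses X y"
      using left_parts_eq[OF code] by force
    then have "u \<in> right_parts X y"
      using right_parts_eq[OF code] by force
    then obtain be where S: "S = be @ u"
      using right by (auto simp: suffix_def)
    obtain al where P: "P = v @ al"
      using left[OF v] by (auto simp: prefix_def)
    obtain xs where xs: "set xs \<subseteq> X" "y = v @ concat xs @ u"
      using parse by (auto simp: parses_iff star_iff)
    with y P S have "concat xs = al @ w @ be" by simp
    from left_part_of_noninternal_factor[OF code xs(1) this not_inside]
    obtain xs1 v' where "set xs1 \<subseteq> X" "al @ v' = concat xs1" "v' \<in> left_parts X w"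
      by blast
    with P show "\<exists>v'. v' \<in> left_parts X w \<and> ?r v v'" by auto
  next
    fix v1 v2 v' assume "v1 \<in> left_parts X y" "v2 \<in> left_parts X y" "?r v1 v'" "?r v2 v'"
    then obtain xs1 xs2 where "set xs1 \<subseteq> X" "set xs2 \<subseteq> X"
      "v1 @ concat xs1 = v2 @ concat xs2" "no_suffix_in X v1" "no_suffix_in X v2"
      unfolding left_parts_def by force
    then show "v1 = v2" by (rule no_suffix_concat_unique[OF code])
  qed
  then show ?thesis using delta_eq_card_left_parts[OF code] by simp
qed

text \<open>In a recurrent set, a word that is not an internal factor of X has at least d parses:
  surround it by a word z of maximal degree on both sides.\<close>

lemma delta_ge_of_noninternal:
  assumes code: "bifix_code X" and "recurrent A F" and degree: "has_F_degree F X d"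
    and "w \<in> F" and not_inside: "\<And>p s. p \<noteq> [] \<Longrightarrow> s \<noteq> [] \<Longrightarrow> p @ w @ s \<notin> X"
  shows "d \<le> delta X w"
proof -
  have fac: "factorial F" and rec: "\<forall>u\<in>F. \<forall>w\<in>F. \<exists>v\<in>F. u @ v @ w \<in> F"
    using \<open>recurrent A F\<close> unfolding recurrent_def by auto
  obtain z where z: "z \<in> F" "delta X z = d" and bound: "\<forall>q\<in>F. delta X q \<le> d"
    using degree unfolding has_F_degree_def by auto
  obtain t where "z @ t @ w \<in> F" using rec z \<open>w \<in> F\<close> by blast
  then obtain t' where "(z @ t @ w) @ t' @ z \<in> F" using rec z by blast
  moreover define y where "y = (z @ t) @ w @ (t' @ z)"
  ultimately have "y \<in> F" by simp
  have maximal: "\<forall>q\<in>F. delta X q \<le> delta X z" using bound z by simp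
  have y_left: "y = z @ (t @ w @ t' @ z)" and y_right: "y = (z @ t @ w @ t') @ z"
    by (simp_all add: y_def)
  have "delta X y = d"
    using bound \<open>y \<in> F\<close> delta_prefix_mono[OF code, of z y] z
    by (simp add: y_def eq_iff)
  moreover have "delta X y \<le> delta X w"
  proof (rule delta_le_of_bordered[OF code y_def not_inside])
    fix v assume "v \<in> left_parts X y"
    with \<open>y \<in> F\<close> have "prefix v z"
      unfolding y_left by (rule left_part_within_maximal_prefix[OF code fac _ maximal])
    then show "prefix v (z @ t)" by (simp add: prefix_prefix)
  next
    fix u assume "u \<in> right_parts X y"
    with \<open>y \<in> F\<close> have "suffix u z"
      unfolding y_right by (rule right_part_within_maximal_suffix[OF code fac _ maximal])
    then show "suffix u (t' @ z)" by (simp add: suffix_appendI)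
  qed
  ultimately show ?thesis by simp
qed

lemma internal_factor: "p @ q @ r \<in> internal A X \<Longrightarrow> q \<in> internal A X"
proof -
  assume "p @ q @ r \<in> internal A X"
  then obtain p' s' where "p @ q @ r \<in> lists A" "p' \<in> lists A" "s' \<in> lists A"
    "p' \<noteq> []" "s' \<noteq> []" "(p' @ p) @ q @ (r @ s') \<in> X"
    unfolding internal_def by auto
  then show ?thesis
    unfolding internal_def by (intro CollectI conjI exI[of _ "p' @ p"] exI[of _ "r @ s'"]) auto
qed

lemma not_internal_not_inside:
  "X \<subseteq> lists A \<Longrightarrow> w \<notin> internal A X \<Longrightarrow> p \<noteq> [] \<Longrightarrow> s \<noteq> [] \<Longrightarrow> p @ w @ s \<notin> X"
  unfolding internal_def by fastforce

lemma internal_iff_delta_less: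
  assumes "recurrent A F" "X \<subseteq> F" and code: "bifix_code X" and degree: "has_F_degree F X d"
    and "w \<in> F"
  shows "w \<in> internal A X \<longleftrightarrow> delta X w < d"
proof
  assume "w \<in> internal A X"
  then obtain p s where "p \<noteq> []" "s \<noteq> []" "p @ w @ s \<in> X"
    unfolding internal_def by blast
  then have "delta X w < delta X (p @ w @ s)"
    using delta_lt_of_proper_factor[OF code] by blast
  also have "\<dots> \<le> d"
    using degree \<open>X \<subseteq> F\<close> \<open>p @ w @ s \<in> X\<close> unfolding has_F_degree_def by blast
  finally show "delta X w < d" .
next
  assume "delta X w < d"
  moreover have "X \<subseteq> lists A"
    using assms(1,2) unfolding recurrent_def by blast
  ultimately show "w \<in> internal A X"
    using delta_ge_of_noninternal[OF code assms(1) degree \<open>w \<in> F\<close>] not_internal_not_inside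
    by (meson leD)
qed

lemma shortest_suffix_outside:
  "[] \<in> S \<Longrightarrow> q \<notin> S \<Longrightarrow> \<exists>b s. suffix (b # s) q \<and> b # s \<notin> S \<and> s \<in> S"
proof (induction q)
  case (Cons b q)
  show ?case
  proof (cases "q \<in> S")
    case True
    with Cons.prems show ?thesis by blast
  next
    case False
    with Cons.IH Cons.prems(1) obtain c s where "suffix (c # s) q" "c # s \<notin> S" "s \<in> S"
      by blast
    then show ?thesis by (meson suffix_ConsI)
  qed
qed simp

section \<open>The code of degree d - 1\<close>

locale bifix_code_of_degree =
  fixes A :: "'a set" and F X :: "'a list set" and d :: nat
  assumes recurrent_F: "recurrent A F" and code_in_F: "X \<subseteq> F" and code: "bifix_code X"
    and degree: "has_F_degree F X d" and two_le_degree: "2 \<le> d"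
begin

text \<open>Basic consequences of the setting; the empty word is internal because it has a single
  parse and d is at least 2.\<close>

lemma factorial_F: "factorial F"
  using recurrent_F unfolding recurrent_def by blast

lemma delta_internal_iff: "w \<in> F \<Longrightarrow> w \<in> internal A X \<longleftrightarrow> delta X w < d"
  using internal_iff_delta_less[OF recurrent_F code_in_F code degree] .

lemma internal_in_F: "w \<in> internal A X \<Longrightarrow> w \<in> F"
proof -
  assume "w \<in> internal A X"
  then obtain p s where "p @ w @ s \<in> X" unfolding internal_def by blast
  with code_in_F have "p @ w @ s \<in> F" by blast
  then show "w \<in> F" by (rule factorial_factor[OF factorial_F])
qed

lemma nil_internal: "[] \<in> internal A X"
proof -
  obtain w where "w \<in> F" using recurrent_F unfolding recurrent_def by blast
  then have "[] \<in> F" using factorial_prefix[OF factorial_F, of w "[]"] by simp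
  moreover have "delta X [] < d" using delta_nil[OF code] two_le_degree by simp
  ultimately show ?thesis using delta_internal_iff by blast
qed

definition boundary :: "'a list set" where
  "boundary = {y \<in> F. y \<noteq> [] \<and> y \<notin> internal A X
     \<and> butlast y \<in> internal A X \<and> tl y \<in> internal A X}"

definition new_code :: "'a list set" where
  "new_code = (X \<inter> internal A X) \<union> boundary"

lemma boundary_eq:
  "(({w @ [a] | w a. w \<in> internal A X \<and> a \<in> A} \<inter> F) - internal A X) \<inter>
   (({[a] @ w | a w. a \<in> A \<and> w \<in> internal A X} \<inter> F) - internal A X) = boundary"
proof (intro equalityI subsetI)
  fix y assume y: "y \<in> boundary"
  then have "y \<in> lists A" "y \<noteq> []"
    using recurrent_F unfolding recurrent_def boundary_def by blast+
  then have "y = butlast y @ [last y] \<and> last y \<in> A" "y = [hd y] @ tl y \<and> hd y \<in> A"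
    by (auto dest: in_listsD)
  with y show "y \<in> (({w @ [a] | w a. w \<in> internal A X \<and> a \<in> A} \<inter> F) - internal A X) \<inter>
      (({[a] @ w | a w. a \<in> A \<and> w \<in> internal A X} \<inter> F) - internal A X)"
    unfolding boundary_def by blast
next
  fix y assume "y \<in> (({w @ [a] | w a. w \<in> internal A X \<and> a \<in> A} \<inter> F) - internal A X) \<inter>
      (({[a] @ w | a w. a \<in> A \<and> w \<in> internal A X} \<inter> F) - internal A X)"
  then obtain w a b w' where "y \<in> F" "y \<notin> internal A X" "y = w @ [a]" "w \<in> internal A X"
    "y = [b] @ w'" "w' \<in> internal A X"
    by blast
  moreover from this have "butlast y = w" "tl y = w'"
    by (metis butlast_snoc, metis append_Cons append_Nil list.sel(3))
  ultimately show "y \<in> boundary" unfolding boundary_def by auto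
qed


text \<open>A boundary word has at least d parses while its longest proper prefix and suffix have fewer,
  so it has no suffix and no prefix in X.\<close>

lemma boundary_parse_free:
  assumes "y \<in> boundary"
  shows "no_suffix_in X y \<and> no_prefix_in X y"
proof -
  have "y \<in> F" "y \<notin> internal A X" "butlast y \<in> internal A X" "tl y \<in> internal A X"
    and y: "y = butlast y @ [last y]" "y = hd y # tl y"
    using assms unfolding boundary_def by auto
  then have "d \<le> delta X y" "delta X (butlast y) < d" "delta X (tl y) < d"
    using delta_internal_iff internal_in_F by (auto simp: not_less)
  moreover have "delta X y = delta X (butlast y) + (if no_suffix_in X y then 1 else 0)"
    using delta_snoc[OF code, of "butlast y" "last y"] y(1) by simp
  moreover have "delta X y = delta X (tl y) + (if no_prefix_in X y then 1 else 0)"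
    using delta_cons[OF code, of "hd y" "tl y"] y(2) by simp
  ultimately show ?thesis by (auto split: if_splits)
qed

lemma new_code_internal: "new_code \<inter> internal A X = X \<inter> internal A X"
  unfolding new_code_def boundary_def by blast

lemma new_code_strict_prefix_internal:
  assumes "y \<in> new_code" "strict_prefix x y"
  shows "x \<in> internal A X"
proof -
  have "y = butlast y @ [last y]"
    using assms(2) by (cases y rule: rev_exhaust) auto
  with assms(2) have "prefix x (butlast y)"
    by (metis prefix_order.less_le prefix_snoc)
  moreover have "butlast y \<in> internal A X"
    using assms(1) internal_factor[of "[]" "butlast y" "[last y]"] \<open>y = butlast y @ [last y]\<close>
    unfolding new_code_def boundary_def by auto
  ultimately show ?thesis
    using internal_factor[of "[]" x] by (auto simp: prefix_def)
qed

lemma new_code_strict_suffix_internal: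
  assumes "y \<in> new_code" "strict_suffix x y"
  shows "x \<in> internal A X"
proof -
  have "y = hd y # tl y"
    using assms(2) by (cases y) auto
  with assms(2) have "suffix x (tl y)"
    by (metis suffix_order.less_le suffix_Cons)
  moreover have "tl y \<in> internal A X"
    using assms(1) internal_factor[of "[hd y]" "tl y" "[]"] \<open>y = hd y # tl y\<close>
    unfolding new_code_def boundary_def by auto
  ultimately show ?thesis
    using internal_factor[of _ x "[]"] by (auto simp: suffix_def)
qed

lemma new_code_bifix: "bifix_code new_code"
  unfolding bifix_code_def
proof (intro conjI ballI notI)
  show "[] \<in> new_code \<Longrightarrow> False"
    using bifix_code_nil[OF code] unfolding new_code_def boundary_def by blast
next
  fix x y assume "x \<in> new_code" "y \<in> new_code" "strict_prefix x y"
  moreover from this have "x \<in> X"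
    using new_code_strict_prefix_internal new_code_internal by blast
  ultimately show False
    using bifix_code_prefix_eq[OF code] boundary_parse_free
    unfolding new_code_def no_prefix_in_def strict_prefix_def by blast
next
  fix x y assume "x \<in> new_code" "y \<in> new_code" "strict_suffix x y"
  moreover from this have "x \<in> X"
    using new_code_strict_suffix_internal new_code_internal by blast
  ultimately show False
    using bifix_code_suffix_eq[OF code] boundary_parse_free
    unfolding new_code_def no_suffix_in_def strict_suffix_def by blast
qed

lemma delta_new_code_internal:
  assumes "w \<in> internal A X"
  shows "delta new_code w = delta X w"
proof (rule delta_cong[OF new_code_bifix code])
  fix s assume "factor s w"
  then have "s \<in> internal A X"
    using assms internal_factor unfolding factor_def by blast
  then show "s \<in> new_code \<longleftrightarrow> s \<in> X"
    using new_code_internal by blast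
qed

text \<open>Every word of F outside I has a suffix in the new code: take its shortest non-internal suffix
  b s; it is either a boundary word, or s has a suffix in X (by counting parses).\<close>

lemma new_code_suffix:
  assumes "q \<in> F" "q \<notin> internal A X"
  shows "\<exists>y\<in>new_code. suffix y q"
proof -
  obtain b s where s: "suffix (b # s) q" "b # s \<notin> internal A X" "s \<in> internal A X"
    using shortest_suffix_outside[OF nil_internal assms(2)] by blast
  have "b # s \<in> F"
    using factorial_suffix[OF factorial_F assms(1) s(1)] .
  show ?thesis
  proof (cases "butlast (b # s) \<in> internal A X")
    case True
    with s \<open>b # s \<in> F\<close> have "b # s \<in> boundary" unfolding boundary_def by simp
    with s(1) show ?thesis unfolding new_code_def by blast
  next
    case False
    then obtain s' a where s': "s = s' @ [a]"
      using nil_internal by (cases s rule: rev_exhaust) auto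
    have "b # s' \<in> F"
      using factorial_prefix[OF factorial_F \<open>b # s \<in> F\<close>] s' by simp
    then have "d \<le> delta X (b # s')"
      using False s' delta_internal_iff by (simp add: not_less)
    moreover have "delta X (b # s') \<le> delta X s' + 1"
      using delta_cons[OF code, of b s'] by simp
    moreover have "delta X s < d"
      using s(3) delta_internal_iff internal_in_F by blast
    ultimately have "\<not> no_suffix_in X s"
      using delta_snoc[OF code, of s' a] s' by (auto split: if_splits)
    then obtain y where y: "suffix y s" "y \<in> X"
      unfolding no_suffix_in_def by blast
    then have "y \<in> new_code"
      using internal_factor[of _ y "[]"] s(3) unfolding new_code_def suffix_def by auto
    moreover have "suffix y q"
      using y(1) s(1) by (meson suffix_ConsI suffix_order.trans)
    ultimately show ?thesis by blast
  qed
qed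

text \<open>Consequently appending a letter never adds a left part outside I, and the first step out of I
  starts from a word with exactly d - 1 parses.\<close>

lemma delta_new_code_external:
  "q \<in> F \<Longrightarrow> q \<notin> internal A X \<Longrightarrow> delta new_code q = d - 1"
proof (induction q rule: rev_induct)
  case Nil
  then show ?case using nil_internal by simp
next
  case (snoc a q)
  have "q \<in> F"
    using factorial_prefix[OF factorial_F snoc.prems(1)] by simp
  have "\<not> no_suffix_in new_code (q @ [a])"
    using new_code_suffix[OF snoc.prems] unfolding no_suffix_in_def by blast
  then have step: "delta new_code (q @ [a]) = delta new_code q"
    using delta_snoc[OF new_code_bifix] by simp
  show ?case
  proof (cases "q \<in> internal A X")
    case True
    have "d \<le> delta X (q @ [a])"
      using snoc.prems delta_internal_iff by (simp add: not_less)
    moreover have "delta X (q @ [a]) \<le> delta X q + 1"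
      using delta_snoc[OF code, of q a] by simp
    moreover have "delta X q < d"
      using True delta_internal_iff \<open>q \<in> F\<close> by blast
    ultimately show ?thesis
      using step delta_new_code_internal[OF True] by simp
  next
    case False
    with snoc.IH \<open>q \<in> F\<close> step show ?thesis by simp
  qed
qed

theorem new_code_degree: "has_F_degree F new_code (d - 1)"
  unfolding has_F_degree_def
proof
  obtain w where "w \<in> F" "delta X w = d"
    using degree unfolding has_F_degree_def by blast
  with delta_internal_iff delta_new_code_external
  show "\<exists>w\<in>F. delta new_code w = d - 1" by auto
next
  show "\<forall>w\<in>F. delta new_code w \<le> d - 1"
  proof
    fix w assume "w \<in> F"
    show "delta new_code w \<le> d - 1"
    proof (cases "w \<in> internal A X")
      case True
      then show ?thesis
        using delta_internal_iff[OF \<open>w \<in> F\<close>] delta_new_code_internal by simp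
    next
      case False
      then show ?thesis using delta_new_code_external[OF \<open>w \<in> F\<close>] by simp
    qed
  qed
qed

end

theorem mainTheorem4:
  fixes A :: "'a set" and F X :: "'a list set" and d :: nat
  assumes "finite A"
    and "recurrent A F"
    and "X \<subseteq> F"
    and "bifix_code X"
    and "has_F_degree F X d"
    and "d \<ge> 2"
  defines "I \<equiv> internal A X"
    and "K \<equiv> kernel A X"
  defines "G \<equiv> ({w @ [a] | w a. w \<in> I \<and> a \<in> A} \<inter> F) - I"
    and "D \<equiv> ({[a] @ w | a w. a \<in> A \<and> w \<in> I} \<inter> F) - I"
  shows "bifix_code (K \<union> (G \<inter> D)) \<and> has_F_degree F (K \<union> (G \<inter> D)) (d - 1)"
proof -
  interpret bifix_code_of_degree A F X d
    using assms(2-6) by unfold_locales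
  have "K \<union> (G \<inter> D) = new_code"
    unfolding K_def kernel_def G_def D_def I_def boundary_eq new_code_def ..
  then show ?thesis
    using new_code_bifix new_code_degree by simp
qed

end
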